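(* Let $I$ be an arbitrary index set and let $\mu$ be a probability measure on the product $\sigma$-algebra $\bigotimes_{i\in I}\mathcal B(\mathbb R)$ on $\mathbb R^I$, with one-dimensional marginal distributions $\mu_i$, $i\in I$. Then there exists a copula measure $C$ on $\mathbb R^I$ such that for each finite subset $J\subseteq I$, $$F_{C_J}\big((F_{\mu_j}(x_j))_{j\in J}\big)=F_{\mu_J}\big((x_j)_{j\in J}\big)\quad\text{for all }(x_j)_{j\in J}\in\mathbb R^J. \qquad (\ast)$$ Moreover, $C$ is unique if $F_{\mu_i}$ is continuous for each $i\in I$. Conversely, let $C$ be a copula measure on $\mathbb R^I$ and let $(\mu_i)_{i\in I}$ be a family of Borel probability measures on $\mathbb R$. Then there exists a unique probability measure $\mu$ on $\bigotimes_{i\in I}\mathcal B(\mathbb R)$ such that $(\ast)$ holds for every finite $J\subseteq I$ (where $F_{\mu_j}$ denotes the distribution function of the given $\mu_j$).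
   Context: For a measure $\nu$ on $(\mathbb R^I,\bigotimes_{i\in I}\mathcal B(\mathbb R))$ and $J\subseteq I$, $\nu_J:=(\pi_J)_*\nu$ is the pushforward under the coordinate projection $\pi_J:\mathbb R^I\to\mathbb R^J$, and $\nu_i:=\nu_{\{i\}}$. For finite $J$, $F_{\nu_J}$ denotes the cumulative distribution function of $\nu_J$ on $\mathbb R^J$, and $F_{\nu_i}$ that of $\nu_i$. A copula measure on $\mathbb R^I$ is a probability measure $C$ on $\bigotimes_{i\in I}\mathcal B(\mathbb R)$ whose one-dimensional marginals $C_i$ are all uniformly distributed on $[0,1]$. *)

theory Defs
  imports "HOL-Probability.Probability"
begin

abbreviation RPi :: "'i set \<Rightarrow> ('i \<Rightarrow> real) measure" where
  "RPi J \<equiv> PiM J (\<lambda>_. borel)"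

definition marg :: "('i \<Rightarrow> real) measure \<Rightarrow> 'i set \<Rightarrow> ('i \<Rightarrow> real) measure" where
  "marg \<nu> J = distr \<nu> (RPi J) (\<lambda>x. restrict x J)"

definition marg1 :: "('i \<Rightarrow> real) measure \<Rightarrow> 'i \<Rightarrow> real measure" where
  "marg1 \<nu> i = distr \<nu> borel (\<lambda>x. x i)"

definition mcdf :: "('i \<Rightarrow> real) measure \<Rightarrow> 'i set \<Rightarrow> ('i \<Rightarrow> real) \<Rightarrow> real" where
  "mcdf M J x = measure M {y \<in> space (RPi J). \<forall>j\<in>J. y j \<le> x j}"

definition copula_measure :: "'i set \<Rightarrow> ('i \<Rightarrow> real) measure \<Rightarrow> bool" where
  "copula_measure I C \<longleftrightarrow> prob_space C \<and> sets C = sets (RPi I) \<and>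
     (\<forall>i\<in>I. marg1 C i = uniform_measure lborel {0..1})"

definition sklar_rel :: "'i set \<Rightarrow> ('i \<Rightarrow> real) measure \<Rightarrow> ('i \<Rightarrow> real) measure \<Rightarrow> ('i \<Rightarrow> real \<Rightarrow> real) \<Rightarrow> bool" where
  "sklar_rel I C \<mu> F \<longleftrightarrow> (\<forall>J. finite J \<and> J \<subseteq> I \<longrightarrow>
     (\<forall>x\<in>space (RPi J). mcdf (marg C J) J (restrict (\<lambda>j. F j (x j)) J) = mcdf (marg \<mu> J) J x))"

end

(* Existence is Rueschendorf's distributional transform: if X has distribution function F
   and V is uniform on [0,1] and independent of X, then U = F(X-) + V (F(X) - F(X-)) is
   uniform on [0,1], and almost surely X <= t iff U <= F(t). Transforming every coordinate
   of X ~ mu with one common V yields a random vector whose law is the required copula.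
   Conversely, pushing C forward along the coordinatewise quantile functions gives the
   required measure, since u <= F(x) iff F^-1(u) <= x for 0 < u < 1.

   Both uniqueness claims rest on the fact that a probability measure on the product
   sigma-algebra is determined by its values on finite-dimensional lower orthants. The Sklar
   relation fixes these values for mu, and for C on the orthants whose corners lie in the
   ranges of the F_j. If all F_j are continuous, these ranges contain (0,1); as the
   coordinates of a copula lie in (0,1) almost surely, every orthant of a copula is null or
   has the same measure as an orthant with corners in (0,1). *)

theory Submission
  imports Defs
begin

section \<open>Lower orthants\<close>

definition lower_orthant :: "'i set \<Rightarrow> 'i set \<Rightarrow> ('i \<Rightarrow> real) \<Rightarrow> ('i \<Rightarrow> real) set" where
  "lower_orthant I J z = {f \<in> space (RPi I). \<forall>j\<in>J. f j \<le> z j}"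

abbreviation lower_orthants :: "'i set \<Rightarrow> ('i \<Rightarrow> real) set set" where
  "lower_orthants I \<equiv> {lower_orthant I J z | J z. finite J \<and> J \<subseteq> I}"

lemma lower_orthant_restrict [simp]: "lower_orthant I J (restrict z J) = lower_orthant I J z"
  by (simp add: lower_orthant_def)

lemma sets_lower_orthant:
  assumes "finite J" "J \<subseteq> I"
  shows "lower_orthant I J z \<in> sets (RPi I)"
proof -
  have "Measurable.pred (RPi I) (\<lambda>f. \<forall>j\<in>J. f j \<le> z j)"
    using assms by (intro pred_intros_finite) (auto intro!: measurable_PiM_component_rev)
  then show ?thesis
    by (simp add: pred_def lower_orthant_def)
qed

lemma mcdf_marg:
  assumes M: "sets M = sets (RPi I)" and J: "finite J" "J \<subseteq> I"
  shows "mcdf (marg M J) J z = measure M (lower_orthant I J z)"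
proof -
  have "(\<lambda>x. restrict x J) \<in> measurable M (RPi J)"
    unfolding measurable_cong_sets[OF M refl] by (rule measurable_restrict_subset[OF J(2)])
  moreover have "(\<lambda>x. restrict x J) -` lower_orthant J J z \<inter> space M = lower_orthant I J z"
    using sets_eq_imp_space_eq[OF M] by (auto simp: lower_orthant_def space_PiM)
  ultimately show ?thesis
    using measure_distr sets_lower_orthant[OF J(1) subset_refl]
    unfolding mcdf_def marg_def lower_orthant_def[symmetric] by metis
qed

lemma lower_orthant_cong:
  "(\<And>j. j \<in> J \<Longrightarrow> z j = z' j) \<Longrightarrow> lower_orthant I J z = lower_orthant I J z'"
  by (auto simp: lower_orthant_def)

lemma sklar_rel_iff_lower_orthants:
  assumes "sets C = sets (RPi I)" "sets \<mu> = sets (RPi I)"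
  shows "sklar_rel I C \<mu> F \<longleftrightarrow> (\<forall>J z. finite J \<and> J \<subseteq> I \<longrightarrow>
           measure C (lower_orthant I J (\<lambda>j. F j (z j))) = measure \<mu> (lower_orthant I J z))"
    (is "_ \<longleftrightarrow> (\<forall>J z. _ \<longrightarrow> ?eq J z)")
proof -
  have sklar_J: "(\<forall>x\<in>space (RPi J). mcdf (marg C J) J (restrict (\<lambda>j. F j (x j)) J) = mcdf (marg \<mu> J) J x)
        \<longleftrightarrow> (\<forall>z. ?eq J z)" if J: "finite J" "J \<subseteq> I" for J
  proof -
    have mcdf_eq: "mcdf (marg C J) J (restrict (\<lambda>j. F j (x j)) J) = mcdf (marg \<mu> J) J x \<longleftrightarrow> ?eq J x" for x
      using J by (simp add: mcdf_marg[OF assms(1)] mcdf_marg[OF assms(2)])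
    have "lower_orthant I J (\<lambda>j. F j (restrict z J j)) = lower_orthant I J (\<lambda>j. F j (z j))" for z
      by (rule lower_orthant_cong) simp
    then have "?eq J (restrict z J) \<longleftrightarrow> ?eq J z" for z
      by simp
    moreover have "restrict z J \<in> space (RPi J)" for z
      by (simp add: space_PiM)
    ultimately show ?thesis
      using mcdf_eq by blast
  qed
  then show ?thesis
    unfolding sklar_rel_def by (simp add: sklar_J)
qed

lemma sets_RPi_lower_orthants:
  fixes I :: "'i set"
  shows "sets (RPi I) = sigma_sets (space (RPi I)) (lower_orthants I)"
proof -
  let ?E = "\<lambda>i::'i. range (\<lambda>a::real. {..a})"
  let ?P = "{{f \<in> (\<Pi>\<^sub>E i\<in>I. UNIV). \<forall>i\<in>J. f i \<in> A i} | A J. J \<in> {J. finite J \<and> J \<subseteq> I} \<and> A \<in> Pi J ?E}"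
  have "sets (RPi I) = sets (sigma (\<Pi>\<^sub>E i\<in>I. UNIV) ?P)"
    unfolding borel_eq_atMost
  proof (rule sets_PiM_sigma)
    show "\<exists>S\<subseteq>?E i. countable S \<and> UNIV = \<Union>S" for i
      by (intro exI[of _ "range (\<lambda>n::nat. {..real n})"]) (auto intro: real_arch_simple)
    show "\<Union> {J. finite J \<and> J \<subseteq> I} = I"
      by (auto intro!: UnionI[of "{_}"])
  qed auto
  also have "\<dots> = sigma_sets (\<Pi>\<^sub>E i\<in>I. UNIV) ?P"
    by (rule sets_measure_of) auto
  also have "?P = lower_orthants I"
  proof (intro set_eqI iffI)
    fix X assume "X \<in> ?P"
    then obtain A J where X: "X = {f \<in> (\<Pi>\<^sub>E i\<in>I. UNIV). \<forall>i\<in>J. f i \<in> A i}"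
      and J: "finite J" "J \<subseteq> I" and A: "A \<in> Pi J ?E"
      by blast
    from A have "\<forall>i\<in>J. \<exists>a. A i = {..a}"
      by auto
    then obtain z where "\<forall>i\<in>J. A i = {..z i}"
      by metis
    then have "X = lower_orthant I J z"
      unfolding X lower_orthant_def by (auto simp: space_PiM)
    with J show "X \<in> lower_orthants I"
      by blast
  next
    fix X assume "X \<in> lower_orthants I"
    then obtain J z where X: "X = lower_orthant I J z" and J: "finite J" "J \<subseteq> I"
      by blast
    have "X = {f \<in> (\<Pi>\<^sub>E i\<in>I. UNIV). \<forall>i\<in>J. f i \<in> {..z i}}"
      unfolding X lower_orthant_def by (auto simp: space_PiM)
    moreover have "(\<lambda>i. {..z i}) \<in> Pi J ?E"
      by (intro Pi_I rangeI)
    ultimately show "X \<in> ?P"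
      using J by (intro CollectI exI[of _ "\<lambda>i. {..z i}"] exI[of _ J]) simp
  qed
  finally show ?thesis
    by (simp only: space_PiM space_borel)
qed

lemma Int_stable_lower_orthants: "Int_stable (lower_orthants I)"
proof (rule Int_stableI)
  fix a b assume "a \<in> lower_orthants I" "b \<in> lower_orthants I"
  then obtain J1 z1 J2 z2 where a: "a = lower_orthant I J1 z1" "finite J1" "J1 \<subseteq> I"
    and b: "b = lower_orthant I J2 z2" "finite J2" "J2 \<subseteq> I"
    by blast
  define z where "z j = (if j \<in> J2 then if j \<in> J1 then min (z1 j) (z2 j) else z2 j else z1 j)" for j
  have "a \<inter> b = lower_orthant I (J1 \<union> J2) z"
    unfolding a b z_def lower_orthant_def by (auto split: if_splits)
  with a b show "a \<inter> b \<in> lower_orthants I"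
    by (intro CollectI exI[of _ "J1 \<union> J2"] exI[of _ z]) simp
qed

lemma measure_eqI_lower_orthants:
  assumes P: "prob_space P" "sets P = sets (RPi I)" and Q: "prob_space Q" "sets Q = sets (RPi I)"
    and eq: "\<And>J z. finite J \<Longrightarrow> J \<subseteq> I \<Longrightarrow> measure P (lower_orthant I J z) = measure Q (lower_orthant I J z)"
  shows "P = Q"
proof (rule measure_eqI_generator_eq[OF Int_stable_lower_orthants, where A="\<lambda>_. space (RPi I)"])
  interpret P: prob_space P by fact
  interpret Q: prob_space Q by fact
  show "lower_orthants I \<subseteq> Pow (space (RPi I))"
    by (auto simp: lower_orthant_def)
  show "sets P = sigma_sets (space (RPi I)) (lower_orthants I)"
    "sets Q = sigma_sets (space (RPi I)) (lower_orthants I)"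
    using P(2) Q(2) sets_RPi_lower_orthants by metis+
  have "space (RPi I) = lower_orthant I {} z" for z
    by (simp add: lower_orthant_def)
  then show "range (\<lambda>_. space (RPi I)) \<subseteq> lower_orthants I"
    by blast
  show "emeasure P (space (RPi I)) \<noteq> \<infinity>"
    using sets_eq_imp_space_eq[OF P(2)] by simp
  fix X assume "X \<in> lower_orthants I"
  then obtain J z where "X = lower_orthant I J z" "finite J" "J \<subseteq> I"
    by blast
  then show "emeasure P X = emeasure Q X"
    using eq by (simp add: P.emeasure_eq_measure Q.emeasure_eq_measure)
qed simp

section \<open>The uniform distribution on the unit interval\<close>

abbreviation unif01 :: "real measure" where
  "unif01 \<equiv> uniform_measure lborel {0..1}"

interpretation unif01: real_distribution unif01
  by (auto intro!: real_distribution.intro prob_space_uniform_measure simp: real_distribution_axioms_def)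

lemma emeasure_unif01: "B \<in> sets borel \<Longrightarrow> emeasure unif01 B = emeasure lborel ({0..1} \<inter> B)"
  by (simp add: divide_ennreal_def)

lemma measure_unif01_lessThan: "measure unif01 {..<a} = max 0 (min 1 a)"
proof -
  consider "a \<le> 0" | "0 < a" "a \<le> 1" | "1 < a"
    by linarith
  then have "measure lborel ({0..1} \<inter> {..<a}) = max 0 (min 1 a)"
  proof cases
    case 1
    then have "{0..1} \<inter> {..<a} = {}" by auto
    with 1 show ?thesis by simp
  next
    case 2
    then have "{0..1} \<inter> {..<a} = {0..<a}" by auto
    with 2 show ?thesis by simp
  next
    case 3
    then have "{0..1} \<inter> {..<a} = {0..1}" by auto
    with 3 show ?thesis by simp
  qed
  then show ?thesis
    by simp
qed

lemma measure_unif01_atMost: "measure unif01 {..a} = max 0 (min 1 a)"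
proof -
  have "AE t in unif01. t \<in> {..a} \<longleftrightarrow> t \<in> {..<a}"
    by (rule AE_uniform_measureI) (use AE_lborel_singleton[of a] in auto)
  then have "measure unif01 {..a} = measure unif01 {..<a}"
    by (rule measure_eq_AE) auto
  then show ?thesis
    by (simp add: measure_unif01_lessThan)
qed

lemma AE_unif01_open: "AE t in unif01. 0 < t \<and> t < 1"
proof (rule AE_uniform_measureI)
  show "AE t in lborel. t \<in> {0..1} \<longrightarrow> 0 < t \<and> t < (1::real)"
    using AE_lborel_singleton[of 0] AE_lborel_singleton[of 1] by eventually_elim auto
qed simp

lemma unif01_eqI:
  assumes "real_distribution D" and lt: "\<And>a. 0 < a \<Longrightarrow> a < 1 \<Longrightarrow> measure D {..<a} = a"
  shows "D = unif01"
proof -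
  interpret D: real_distribution D by fact
  have mono: "measure D {..<a} \<le> measure D {..<b}" if "a \<le> b" for a b
    using that by (intro D.finite_measure_mono) auto
  have "measure D {..<a} = measure unif01 {..<a}" for a
  proof -
    consider "a \<le> 0" | "0 < a" "a < 1" | "1 \<le> a"
      by linarith
    then have "measure D {..<a} = max 0 (min 1 a)"
    proof cases
      case 1
      have "measure D {..<a} \<le> w" if "0 < w" "w < 1" for w
        using mono[of a w] lt[OF that] 1 that by linarith
      then have "measure D {..<a} \<le> 0"
        by (rule dense_ge_bounded[OF zero_less_one])
      with 1 show ?thesis
        by (simp add: antisym)
    next
      case 2
      with lt show ?thesis by simp
    next
      case 3
      have "w \<le> measure D {..<a}" if "0 < w" "w < 1" for w
        using mono[of w a] lt[OF that] 3 that by linarith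
      then have "1 \<le> measure D {..<a}"
        by (rule dense_le_bounded[OF zero_less_one])
      with 3 D.prob_le_1[of "{..<a}"] show ?thesis
        by linarith
    qed
    then show ?thesis
      by (simp add: measure_unif01_lessThan)
  qed
  then show ?thesis
  proof (intro measure_eqI_generator_eq[where E="range lessThan" and \<Omega>=UNIV and A="\<lambda>n. {..<real n}"])
    have "{..<a} \<inter> {..<b} = {..<min a b}" for a b :: real
      by auto
    then show "Int_stable (range lessThan :: real set set)"
      by (auto simp: Int_stable_def)
    show "sets D = sigma_sets UNIV (range lessThan)" "sets unif01 = sigma_sets UNIV (range lessThan)"
      by (simp_all add: borel_Iio)
  qed (auto simp: D.emeasure_eq_measure unif01.emeasure_eq_measure intro: reals_Archimedean2)
qed

section \<open>The distributional transform\<close>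

definition distributional_transform :: "real measure \<Rightarrow> real \<Rightarrow> real \<Rightarrow> real" where
  "distributional_transform M x v = measure M {..<x} + v * measure M {x}"

lemma (in prob_space) AE_iff_of_AE_imp_of_prob_eq:
  assumes A: "{x \<in> space M. P x} \<in> events" and B: "{x \<in> space M. Q x} \<in> events"
    and imp: "AE x in M. P x \<longrightarrow> Q x"
    and eq: "prob {x \<in> space M. P x} = prob {x \<in> space M. Q x}"
  shows "AE x in M. P x \<longleftrightarrow> Q x"
proof -
  let ?A = "{x \<in> space M. P x}" and ?B = "{x \<in> space M. Q x}"
  have "prob (?B \<inter> ?A) = prob ?A"
    by (rule measure_eq_AE) (use imp A B in auto)
  then have "prob (?B - ?A) = 0"
    using finite_measure_Diff'[OF B A] eq by simp
  then have "AE x in M. x \<notin> ?B - ?A"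
    using prob_eq_0[of "?B - ?A"] A B by blast
  with imp AE_space show ?thesis
    by eventually_elim auto
qed

context real_distribution
begin

lemma cdf_eq_measure_lessThan_plus_singleton: "cdf M x = measure M {..<x} + measure M {x}"
proof -
  have "{..x} = {..<x} \<union> {x}"
    by auto
  moreover have "measure M ({..<x} \<union> {x}) = measure M {..<x} + measure M {x}"
    by (rule finite_measure_Union) auto
  ultimately show ?thesis
    unfolding cdf_def by (simp only:)
qed

lemma cdf_le_measure_lessThan: "x < y \<Longrightarrow> cdf M x \<le> measure M {..<y}"
  unfolding cdf_def by (intro finite_measure_mono) auto

lemma measure_lessThan_le_of_cdf_le:
  assumes "\<And>y. y < q \<Longrightarrow> cdf M y \<le> a"
  shows "measure M {..<q} \<le> a"
proof (rule tendsto_upperbound[OF cdf_at_left])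
  show "\<forall>\<^sub>F y in at_left q. cdf M y \<le> a"
    using assms by (intro eventually_at_leftI[of "q - 1"]) auto
qed simp

lemma borel_measurable_measure_lessThan [measurable]:
  "(\<lambda>x. measure M {..<x}) \<in> borel_measurable borel"
  by (rule borel_measurable_mono) (auto simp: mono_def intro!: finite_measure_mono)

lemma borel_measurable_measure_singleton [measurable]:
  "(\<lambda>x. measure M {x}) \<in> borel_measurable borel"
proof -
  have [measurable]: "cdf M \<in> borel_measurable borel"
    by (rule borel_measurable_mono) (auto simp: mono_def cdf_nondecreasing)
  have "(\<lambda>x. measure M {x}) = (\<lambda>x. cdf M x - measure M {..<x})"
    by (simp add: cdf_eq_measure_lessThan_plus_singleton)
  then show ?thesis
    by simp
qed

lemma borel_measurable_distributional_transform [measurable]: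
  "(\<lambda>p. distributional_transform M (fst p) (snd p)) \<in> borel_measurable (M \<Otimes>\<^sub>M unif01)"
  unfolding distributional_transform_def by measurable

lemma distributional_transform_bounds:
  assumes "0 \<le> v" "v \<le> 1"
  shows "measure M {..<x} \<le> distributional_transform M x v"
    and "distributional_transform M x v \<le> cdf M x"
  using assms mult_left_le_one_le[of "measure M {x}" v]
  by (simp_all add: distributional_transform_def cdf_eq_measure_lessThan_plus_singleton)

(* Without an atom at q, the convention x / 0 = 0 makes c = 0. *)
lemma emeasure_unif01_distributional_transform_less:
  assumes q: "\<And>x. a \<le> cdf M x \<longleftrightarrow> q \<le> x"
  defines "c \<equiv> (a - measure M {..<q}) / measure M {q}"
  shows "emeasure unif01 {v. distributional_transform M y v < a} = indicator {..<q} y + ennreal c * indicator {q} y"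
proof -
  let ?DT = "distributional_transform M"
  have [measurable]: "{v. ?DT y v < a} \<in> sets borel"
    unfolding distributional_transform_def by measurable
  have left: "measure M {..<q} \<le> a"
    using q by (intro measure_lessThan_le_of_cdf_le) (meson less_le_not_le nle_le)
  have "{0..1} \<inter> {v. ?DT y v < a} = (if y < q then {0..1} else if y = q then {0..<c} else {})"
  proof (cases y q rule: linorder_cases)
    case less
    then have "cdf M y < a"
      using q not_le by blast
    then show ?thesis
      using less distributional_transform_bounds(2)[of _ y] by force
  next
    case equal
    consider "measure M {q} = 0" | "measure M {q} > 0"
      using measure_nonneg[of M "{q}"] by linarith
    then show ?thesis
    proof cases
      case 1
      then show ?thesis
        using equal q[of q] by (auto simp: distributional_transform_def c_def cdf_eq_measure_lessThan_plus_singleton)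
    next
      case 2
      have iff: "?DT q v < a \<longleftrightarrow> v < c" for v
        using 2 by (simp add: distributional_transform_def c_def pos_less_divide_eq algebra_simps)
      have "c \<le> 1"
        using 2 q[of q] by (simp add: c_def cdf_eq_measure_lessThan_plus_singleton)
      then have "{0..1} \<inter> {v. ?DT q v < a} = {0..<c}"
        using iff by (intro set_eqI) (simp, linarith)
      then show ?thesis
        using equal by simp
    qed
  next
    case greater
    then have "a \<le> measure M {..<y}"
      using q[of q] cdf_le_measure_lessThan[OF greater] by simp
    then show ?thesis
      using greater distributional_transform_bounds(1)[of _ y] by force
  qed
  moreover have "0 \<le> c"
    using left by (simp add: c_def)
  ultimately show ?thesis
    by (auto simp: emeasure_unif01 indicator_def simp del: emeasure_uniform_measure)
qed

lemma emeasure_distributional_transform_less: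
  assumes a: "0 < a" "a < 1"
  shows "emeasure (M \<Otimes>\<^sub>M unif01) {p \<in> space (M \<Otimes>\<^sub>M unif01). distributional_transform M (fst p) (snd p) < a} = a"
    (is "emeasure _ ?S = _")
proof -
  interpret cdf_distribution M
    by (simp add: cdf_distribution_def real_distribution_axioms)
  define q where "q = Inf {x. a \<le> cdf M x}"
  define c where "c = (a - measure M {..<q}) / measure M {q}"
  have q: "a \<le> cdf M x \<longleftrightarrow> q \<le> x" for x
    unfolding q_def by (rule pseudoinverse[OF a])
  have left: "measure M {..<q} \<le> a"
    using q by (intro measure_lessThan_le_of_cdf_le) (meson less_le_not_le nle_le)
  have "0 \<le> c"
    using left by (simp add: c_def)
  have fill: "measure M {..<q} + c * measure M {q} = a"
  proof (cases "measure M {q} = 0")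
    case True
    then show ?thesis
      using left q[of q] by (simp add: c_def cdf_eq_measure_lessThan_plus_singleton)
  qed (simp add: c_def)
  have "?S \<in> sets (M \<Otimes>\<^sub>M unif01)"
    by measurable
  then have "emeasure (M \<Otimes>\<^sub>M unif01) ?S = (\<integral>\<^sup>+y. emeasure unif01 (Pair y -` ?S) \<partial>M)"
    by (rule unif01.emeasure_pair_measure_alt)
  also have "\<dots> = (\<integral>\<^sup>+y. indicator {..<q} y + ennreal c * indicator {q} y \<partial>M)"
    using emeasure_unif01_distributional_transform_less[OF q]
    by (intro nn_integral_cong) (simp add: space_pair_measure c_def vimage_def)
  also have "\<dots> = emeasure M {..<q} + ennreal c * emeasure M {q}"
    by (simp add: nn_integral_add nn_integral_cmult_indicator)
  also have "\<dots> = ennreal (measure M {..<q} + c * measure M {q})"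
    using \<open>0 \<le> c\<close> by (simp add: emeasure_eq_measure ennreal_mult)
  finally show ?thesis
    by (simp add: fill)
qed

lemma distr_distributional_transform:
  "distr (M \<Otimes>\<^sub>M unif01) borel (\<lambda>p. distributional_transform M (fst p) (snd p)) = unif01"
proof (rule unif01_eqI)
  interpret P: prob_space "M \<Otimes>\<^sub>M unif01"
    by (rule prob_space_pair) unfold_locales
  show "real_distribution (distr (M \<Otimes>\<^sub>M unif01) borel (\<lambda>p. distributional_transform M (fst p) (snd p)))"
    by (rule P.real_distribution_distr) simp
  fix a :: real assume "0 < a" "a < 1"
  then show "measure (distr (M \<Otimes>\<^sub>M unif01) borel (\<lambda>p. distributional_transform M (fst p) (snd p))) {..<a} = a"
    using emeasure_distributional_transform_less[of a]
    by (simp add: measure_distr P.emeasure_eq_measure vimage_def Int_def conj_commute)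
qed

lemma AE_le_iff_distributional_transform_le:
  "AE p in M \<Otimes>\<^sub>M unif01. fst p \<le> t \<longleftrightarrow> distributional_transform M (fst p) (snd p) \<le> cdf M t"
proof -
  let ?P = "M \<Otimes>\<^sub>M unif01" and ?DT = "\<lambda>p. distributional_transform M (fst p) (snd p)"
  interpret P: prob_space ?P
    by (rule prob_space_pair) unfold_locales
  interpret pair_sigma_finite M unif01 ..
  have unit: "AE p in ?P. 0 \<le> snd p \<and> snd p \<le> 1"
  proof (rule AE_pair_measure)
    show "{p \<in> space ?P. 0 \<le> snd p \<and> snd p \<le> 1} \<in> sets ?P"
      by measurable
    have "AE v in unif01. 0 \<le> v \<and> v \<le> 1"
      using AE_unif01_open by eventually_elim auto
    then show "AE x in M. AE v in unif01. 0 \<le> snd (x, v) \<and> snd (x, v) \<le> 1"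
      by simp
  qed
  show ?thesis
  proof (rule P.AE_iff_of_AE_imp_of_prob_eq)
    show "{p \<in> space ?P. fst p \<le> t} \<in> P.events" "{p \<in> space ?P. ?DT p \<le> cdf M t} \<in> P.events"
      by measurable
    show "AE p in ?P. fst p \<le> t \<longrightarrow> ?DT p \<le> cdf M t"
      using unit by eventually_elim (metis cdf_nondecreasing distributional_transform_bounds(2) order_trans)
    have "fst -` {..t} \<inter> space ?P = {p \<in> space ?P. fst p \<le> t}"
      by auto
    then have "P.prob {p \<in> space ?P. fst p \<le> t} = measure (distr ?P M fst) {..t}"
      by (simp add: measure_distr)
    also have "\<dots> = cdf M t"
      by (simp add: unif01.distr_pair_fst cdf_def)
    finally have prob_le: "P.prob {p \<in> space ?P. fst p \<le> t} = cdf M t" .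
    have "?DT -` {..cdf M t} \<inter> space ?P = {p \<in> space ?P. ?DT p \<le> cdf M t}"
      by auto
    then have "P.prob {p \<in> space ?P. ?DT p \<le> cdf M t} = measure (distr ?P borel ?DT) {..cdf M t}"
      by (simp add: measure_distr)
    also have "\<dots> = cdf M t"
      using cdf_nonneg[of t] cdf_bounded_prob[of t]
      by (simp add: distr_distributional_transform measure_unif01_atMost)
    finally have "P.prob {p \<in> space ?P. ?DT p \<le> cdf M t} = cdf M t" .
    with prob_le show "P.prob {p \<in> space ?P. fst p \<le> t} = P.prob {p \<in> space ?P. ?DT p \<le> cdf M t}"
      by simp
  qed
qed

end

section \<open>Existence of the copula\<close>

lemma borel_measurable_component:
  assumes "sets M = sets (RPi I)" "i \<in> I"
  shows "(\<lambda>x. x i) \<in> borel_measurable M"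
  unfolding measurable_cong_sets[OF assms(1) refl]
  by (rule measurable_PiM_component_rev[OF assms(2)]) auto

lemma real_distribution_marg1:
  assumes "prob_space M" "sets M = sets (RPi I)" "i \<in> I"
  shows "real_distribution (marg1 M i)"
  unfolding marg1_def
  by (rule prob_space.real_distribution_distr[OF assms(1) borel_measurable_component[OF assms(2,3)]])

lemma distr_component_pair_measure:
  assumes M: "sets M = sets (RPi I)" "i \<in> I" and N: "sigma_finite_measure N"
  shows "distr (M \<Otimes>\<^sub>M N) (marg1 M i \<Otimes>\<^sub>M N) (\<lambda>p. (fst p i, snd p)) = marg1 M i \<Otimes>\<^sub>M N"
proof -
  have "marg1 M i \<Otimes>\<^sub>M N = distr M borel (\<lambda>x. x i) \<Otimes>\<^sub>M distr N N (\<lambda>v. v)"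
    by (simp add: marg1_def)
  also have "\<dots> = distr (M \<Otimes>\<^sub>M N) (borel \<Otimes>\<^sub>M N) (\<lambda>(x, v). (x i, v))"
    using borel_measurable_component[OF M] N by (intro pair_measure_distr) simp_all
  also have "\<dots> = distr (M \<Otimes>\<^sub>M N) (marg1 M i \<Otimes>\<^sub>M N) (\<lambda>p. (fst p i, snd p))"
    by (rule distr_cong) (auto simp: marg1_def split_beta intro!: sets_pair_measure_cong)
  finally show ?thesis ..
qed

context
  fixes I :: "'i set" and \<mu> :: "('i \<Rightarrow> real) measure"
  assumes prob_space_\<mu>: "prob_space \<mu>" and sets_\<mu>: "sets \<mu> = sets (RPi I)"
begin

definition sklar_copula :: "('i \<Rightarrow> real) measure" where
  "sklar_copula = distr (\<mu> \<Otimes>\<^sub>M unif01) (RPi I)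
     (\<lambda>p. \<lambda>i\<in>I. distributional_transform (marg1 \<mu> i) (fst p i) (snd p))"

lemma measurable_component_pair:
  "i \<in> I \<Longrightarrow> (\<lambda>p. (fst p i, snd p)) \<in> measurable (\<mu> \<Otimes>\<^sub>M unif01) (marg1 \<mu> i \<Otimes>\<^sub>M unif01)"
  using borel_measurable_component[OF sets_\<mu>] by (auto simp: marg1_def intro!: measurable_Pair)

lemma AE_component_pair:
  assumes "i \<in> I" "AE q in marg1 \<mu> i \<Otimes>\<^sub>M unif01. P q"
  shows "AE p in \<mu> \<Otimes>\<^sub>M unif01. P (fst p i, snd p)"
proof -
  have "AE q in distr (\<mu> \<Otimes>\<^sub>M unif01) (marg1 \<mu> i \<Otimes>\<^sub>M unif01) (\<lambda>p. (fst p i, snd p)). P q"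
    unfolding distr_component_pair_measure[OF sets_\<mu> assms(1) unif01.sigma_finite_measure_axioms]
    by (rule assms(2))
  then show ?thesis
    by (rule AE_distrD[OF measurable_component_pair[OF assms(1)]])
qed

lemma borel_measurable_distributional_transform_component:
  assumes "i \<in> I"
  shows "(\<lambda>p. distributional_transform (marg1 \<mu> i) (fst p i) (snd p)) \<in> borel_measurable (\<mu> \<Otimes>\<^sub>M unif01)"
proof -
  interpret real_distribution "marg1 \<mu> i"
    by (rule real_distribution_marg1[OF prob_space_\<mu> sets_\<mu> assms])
  show ?thesis
    using measurable_comp[OF measurable_component_pair[OF assms] borel_measurable_distributional_transform]
    by (simp add: comp_def)
qed

lemma distr_distributional_transform_component:
  assumes "i \<in> I"
  shows "distr (\<mu> \<Otimes>\<^sub>M unif01) borel (\<lambda>p. distributional_transform (marg1 \<mu> i) (fst p i) (snd p)) = unif01"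
proof -
  interpret real_distribution "marg1 \<mu> i"
    by (rule real_distribution_marg1[OF prob_space_\<mu> sets_\<mu> assms])
  have "distr (\<mu> \<Otimes>\<^sub>M unif01) borel (\<lambda>p. distributional_transform (marg1 \<mu> i) (fst p i) (snd p))
      = distr (distr (\<mu> \<Otimes>\<^sub>M unif01) (marg1 \<mu> i \<Otimes>\<^sub>M unif01) (\<lambda>p. (fst p i, snd p))) borel
          (\<lambda>q. distributional_transform (marg1 \<mu> i) (fst q) (snd q))"
    by (subst distr_distr[OF _ measurable_component_pair[OF assms]]) (simp_all add: comp_def)
  also have "\<dots> = unif01"
    by (simp add: distr_component_pair_measure[OF sets_\<mu> assms unif01.sigma_finite_measure_axioms]
        distr_distributional_transform)
  finally show ?thesis .
qed

lemma measurable_sklar_copula_map: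
  "(\<lambda>p. \<lambda>i\<in>I. distributional_transform (marg1 \<mu> i) (fst p i) (snd p)) \<in> measurable (\<mu> \<Otimes>\<^sub>M unif01) (RPi I)"
  by (rule measurable_restrict) (rule borel_measurable_distributional_transform_component)

lemma copula_measure_sklar_copula: "copula_measure I sklar_copula"
  unfolding copula_measure_def
proof (intro conjI ballI)
  interpret P: prob_space "\<mu> \<Otimes>\<^sub>M unif01"
    using prob_space_\<mu> by (rule prob_space_pair) unfold_locales
  show "prob_space sklar_copula"
    unfolding sklar_copula_def by (rule P.prob_space_distr[OF measurable_sklar_copula_map])
  show "sets sklar_copula = sets (RPi I)"
    by (simp add: sklar_copula_def)
  fix i assume i: "i \<in> I"
  have "marg1 sklar_copula i = distr sklar_copula borel (\<lambda>x. x i)"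
    by (rule marg1_def)
  also have "\<dots> = distr (\<mu> \<Otimes>\<^sub>M unif01) borel ((\<lambda>x. x i) \<circ> (\<lambda>p. \<lambda>i\<in>I. distributional_transform (marg1 \<mu> i) (fst p i) (snd p)))"
    unfolding sklar_copula_def
    by (rule distr_distr[OF measurable_PiM_component_rev[OF i] measurable_sklar_copula_map]) simp
  also have "\<dots> = distr (\<mu> \<Otimes>\<^sub>M unif01) borel (\<lambda>p. distributional_transform (marg1 \<mu> i) (fst p i) (snd p))"
    using i by (intro distr_cong) auto
  finally show "marg1 sklar_copula i = unif01"
    using distr_distributional_transform_component[OF i] by simp
qed

lemma sklar_rel_sklar_copula: "sklar_rel I sklar_copula \<mu> (\<lambda>i. cdf (marg1 \<mu> i))"
proof -
  interpret P: prob_space "\<mu> \<Otimes>\<^sub>M unif01"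
    using prob_space_\<mu> by (rule prob_space_pair) unfold_locales
  let ?P = "\<mu> \<Otimes>\<^sub>M unif01"
  let ?\<Phi> = "\<lambda>p. \<lambda>i\<in>I. distributional_transform (marg1 \<mu> i) (fst p i) (snd p)"
  have "measure sklar_copula (lower_orthant I J (\<lambda>j. cdf (marg1 \<mu> j) (z j))) = measure \<mu> (lower_orthant I J z)"
    if J: "finite J" "J \<subseteq> I" for J z
  proof -
    let ?A = "?\<Phi> -` lower_orthant I J (\<lambda>j. cdf (marg1 \<mu> j) (z j)) \<inter> space ?P"
    let ?B = "fst -` lower_orthant I J z \<inter> space ?P"
    have fst: "fst \<in> measurable ?P \<mu>" and orthant: "lower_orthant I J z \<in> sets \<mu>"
      using sets_lower_orthant[OF J] by (simp_all add: sets_\<mu>)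
    have "AE p in ?P. \<forall>j\<in>J. fst p j \<le> z j \<longleftrightarrow>
        distributional_transform (marg1 \<mu> j) (fst p j) (snd p) \<le> cdf (marg1 \<mu> j) (z j)"
    proof (rule AE_ball_countable')
      fix j assume "j \<in> J"
      with J have j: "j \<in> I" by auto
      interpret real_distribution "marg1 \<mu> j"
        by (rule real_distribution_marg1[OF prob_space_\<mu> sets_\<mu> j])
      show "AE p in ?P. fst p j \<le> z j \<longleftrightarrow>
          distributional_transform (marg1 \<mu> j) (fst p j) (snd p) \<le> cdf (marg1 \<mu> j) (z j)"
        using AE_component_pair[OF j AE_le_iff_distributional_transform_le[of "z j"]] by simp
    qed (simp add: J countable_finite)
    then have "AE p in ?P. p \<in> ?A \<longleftrightarrow> p \<in> ?B"
      by eventually_elim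
        (use J(2) sets_eq_imp_space_eq[OF sets_\<mu>] in \<open>auto simp: lower_orthant_def space_pair_measure space_PiM\<close>)
    then have "P.prob ?A = P.prob ?B"
      by (rule measure_eq_AE[OF _ measurable_sets[OF measurable_sklar_copula_map sets_lower_orthant[OF J]]
            measurable_sets[OF fst orthant]])
    then show ?thesis
      unfolding sklar_copula_def
      by (simp add: measure_distr[OF measurable_sklar_copula_map sets_lower_orthant[OF J]]
          measure_distr[OF fst orthant, symmetric] unif01.distr_pair_fst)
  qed
  moreover have "sets sklar_copula = sets (RPi I)"
    by (simp add: sklar_copula_def)
  ultimately show ?thesis
    by (simp add: sklar_rel_iff_lower_orthants sets_\<mu>)
qed

end

section \<open>Uniqueness of the copula for continuous margins\<close>

lemma copula_measureD:
  assumes "copula_measure I C"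
  shows "prob_space C" "sets C = sets (RPi I)" "i \<in> I \<Longrightarrow> marg1 C i = unif01"
  using assms by (simp_all add: copula_measure_def)

lemma AE_copula_measure_open:
  assumes C: "copula_measure I C" and J: "countable J" "J \<subseteq> I"
  shows "AE u in C. \<forall>j\<in>J. 0 < u j \<and> u j < 1"
proof (rule AE_ball_countable'[OF _ J(1)])
  fix j assume "j \<in> J"
  with J(2) have j: "j \<in> I" by auto
  have "AE t in marg1 C j. 0 < t \<and> t < 1"
    unfolding copula_measureD(3)[OF C j] by (rule AE_unif01_open)
  then show "AE u in C. 0 < u j \<and> u j < 1"
    unfolding marg1_def by (rule AE_distrD[OF borel_measurable_component[OF copula_measureD(2)[OF C] j]])
qed

lemma measure_copula_lower_orthant:
  assumes C: "copula_measure I C" and J: "finite J" "J \<subseteq> I"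
  shows "measure C (lower_orthant I J z) =
    (if \<exists>j\<in>J. z j \<le> 0 then 0 else measure C (lower_orthant I {j\<in>J. z j < 1} z))"
proof -
  have orthant: "lower_orthant I J' z \<in> sets C" if "J' \<subseteq> J" for J'
    using sets_lower_orthant[of J' I z] that J by (simp add: copula_measureD(2)[OF C] finite_subset)
  have "AE u in C. \<forall>j\<in>J. 0 < u j \<and> u j < 1"
    using AE_copula_measure_open[OF C] J by (simp add: countable_finite)
  show ?thesis
  proof (cases "\<exists>j\<in>J. z j \<le> 0")
    case True
    from \<open>AE u in C. \<forall>j\<in>J. 0 < u j \<and> u j < 1\<close> have "AE u in C. u \<in> lower_orthant I J z \<longleftrightarrow> u \<in> {}"
      by eventually_elim (use True in \<open>fastforce simp: lower_orthant_def\<close>)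
    then have "measure C (lower_orthant I J z) = measure C {}"
      by (rule measure_eq_AE[OF _ orthant[OF subset_refl] sets.empty_sets])
    with True show ?thesis
      by simp
  next
    case False
    from \<open>AE u in C. \<forall>j\<in>J. 0 < u j \<and> u j < 1\<close>
    have "AE u in C. u \<in> lower_orthant I J z \<longleftrightarrow> u \<in> lower_orthant I {j\<in>J. z j < 1} z"
    proof eventually_elim
      case (elim u)
      then have "u j \<le> z j \<longleftrightarrow> (z j < 1 \<longrightarrow> u j \<le> z j)" if "j \<in> J" for j
        using that by force
      then show ?case
        by (auto simp: lower_orthant_def)
    qed
    then have "measure C (lower_orthant I J z) = measure C (lower_orthant I {j\<in>J. z j < 1} z)"
      by (rule measure_eq_AE[OF _ orthant orthant]) auto
    with False show ?thesis
      by simp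
  qed
qed

lemma copula_measure_eqI:
  assumes C1: "copula_measure I C1" and C2: "copula_measure I C2"
    and eq: "\<And>J z. finite J \<Longrightarrow> J \<subseteq> I \<Longrightarrow> (\<And>j. j \<in> J \<Longrightarrow> 0 < z j \<and> z j < 1) \<Longrightarrow>
               measure C1 (lower_orthant I J z) = measure C2 (lower_orthant I J z)"
  shows "C1 = C2"
proof (rule measure_eqI_lower_orthants)
  show "prob_space C1" "sets C1 = sets (RPi I)" "prob_space C2" "sets C2 = sets (RPi I)"
    using C1 C2 by (simp_all add: copula_measureD)
  fix J z assume J: "finite J" "J \<subseteq> I"
  have "measure C1 (lower_orthant I {j\<in>J. z j < 1} z) = measure C2 (lower_orthant I {j\<in>J. z j < 1} z)"
    if "\<not> (\<exists>j\<in>J. z j \<le> 0)"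
    using J that by (intro eq) auto
  then show "measure C1 (lower_orthant I J z) = measure C2 (lower_orthant I J z)"
    by (simp add: measure_copula_lower_orthant[OF C1 J] measure_copula_lower_orthant[OF C2 J])
qed

lemma (in real_distribution) ex_cdf_eq:
  assumes cont: "\<And>x. isCont (cdf M) x" and w: "0 < w" "w < 1"
  shows "\<exists>x. cdf M x = w"
proof -
  obtain a where a: "cdf M a < w"
    using order_tendstoD(2)[OF cdf_lim_at_bot w(1)] by (auto simp: eventually_at_bot_linorder)
  obtain b where b: "w < cdf M b"
    using order_tendstoD(1)[OF cdf_lim_at_top_prob w(2)] by (auto simp: eventually_at_top_linorder)
  have "a \<le> b"
    using a b cdf_nondecreasing[of b a] by (cases "a \<le> b") auto
  moreover have "continuous_on {a..b} (cdf M)"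
    using cont by (intro continuous_at_imp_continuous_on) auto
  ultimately show ?thesis
    using IVT'[of "cdf M" a w b] a b by auto
qed

lemma sklar_copula_unique:
  assumes C1: "copula_measure I C1" "sklar_rel I C1 \<mu> F" and C2: "copula_measure I C2" "sklar_rel I C2 \<mu> F"
    and \<mu>: "sets \<mu> = sets (RPi I)"
    and surj: "\<And>i w. i \<in> I \<Longrightarrow> 0 < w \<Longrightarrow> w < 1 \<Longrightarrow> \<exists>x. F i x = w"
  shows "C1 = C2"
proof (rule copula_measure_eqI[OF C1(1) C2(1)])
  fix J and z :: "_ \<Rightarrow> real"
  assume J: "finite J" "J \<subseteq> I" and z: "\<And>j. j \<in> J \<Longrightarrow> 0 < z j \<and> z j < 1"
  have "\<forall>j\<in>J. \<exists>x. F j x = z j"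
    using J z surj by blast
  then obtain y where y: "\<And>j. j \<in> J \<Longrightarrow> F j (y j) = z j"
    by metis
  then have z_eq: "lower_orthant I J z = lower_orthant I J (\<lambda>j. F j (y j))"
    by (intro lower_orthant_cong) simp
  show "measure C1 (lower_orthant I J z) = measure C2 (lower_orthant I J z)"
    using C1(2) C2(2) J unfolding z_eq
    by (simp add: sklar_rel_iff_lower_orthants[OF copula_measureD(2)[OF C1(1)] \<mu>]
        sklar_rel_iff_lower_orthants[OF copula_measureD(2)[OF C2(1)] \<mu>])
qed

section \<open>From a copula and margins to a measure\<close>

(* The value outside (0,1) is irrelevant: the coordinates of a copula lie in (0,1) almost surely. *)
definition quantile :: "real measure \<Rightarrow> real \<Rightarrow> real" where
  "quantile M u = (if u \<in> {0<..<1} then Inf {x. u \<le> cdf M x} else 0)"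

context real_distribution
begin

lemma quantile_le_iff: "0 < u \<Longrightarrow> u < 1 \<Longrightarrow> quantile M u \<le> x \<longleftrightarrow> u \<le> cdf M x"
proof -
  interpret cdf_distribution M
    by (simp add: cdf_distribution_def real_distribution_axioms)
  assume "0 < u" "u < 1"
  then show ?thesis
    unfolding quantile_def using pseudoinverse[of u x] by simp
qed

lemma borel_measurable_quantile: "quantile M \<in> borel_measurable borel"
proof -
  interpret cdf_distribution M
    by (simp add: cdf_distribution_def real_distribution_axioms)
  show ?thesis
    unfolding quantile_def[abs_def]
  proof (subst measurable_If_restrict_space_iff)
    show "(\<lambda>u. Inf {x. u \<le> cdf M x}) \<in> borel_measurable (restrict_space borel {u. u \<in> {0<..<1}})
      \<and> (\<lambda>u. 0) \<in> borel_measurable (restrict_space borel {u. u \<notin> {0<..<1}})"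
      unfolding Collect_mem_eq by (intro conjI measurable_CI measurable_const) simp
  qed simp
qed

end

lemma sklar_rel_unique:
  assumes \<mu>1: "prob_space \<mu>1" "sets \<mu>1 = sets (RPi I)" "sklar_rel I C \<mu>1 F"
    and \<mu>2: "prob_space \<mu>2" "sets \<mu>2 = sets (RPi I)" "sklar_rel I C \<mu>2 F"
  shows "\<mu>1 = \<mu>2"
proof (rule measure_eqI_lower_orthants[OF \<mu>1(1,2) \<mu>2(1,2)])
  fix J z assume J: "finite J" "J \<subseteq> I"
  have z: "restrict z J \<in> space (RPi J)"
    by (simp add: space_PiM)
  have "mcdf (marg C J) J (restrict (\<lambda>j. F j (restrict z J j)) J) = mcdf (marg \<mu> J) J (restrict z J)"
    if "sklar_rel I C \<mu> F" for \<mu>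
    using that J z unfolding sklar_rel_def by blast
  then have "mcdf (marg \<mu>1 J) J (restrict z J) = mcdf (marg \<mu>2 J) J (restrict z J)"
    using \<mu>1(3) \<mu>2(3) by metis
  then show "measure \<mu>1 (lower_orthant I J z) = measure \<mu>2 (lower_orthant I J z)"
    by (simp add: mcdf_marg[OF \<mu>1(2) J] mcdf_marg[OF \<mu>2(2) J])
qed


context
  fixes I :: "'i set" and C :: "('i \<Rightarrow> real) measure" and \<nu> :: "'i \<Rightarrow> real measure"
  assumes copula: "copula_measure I C" and \<nu>: "\<And>i. i \<in> I \<Longrightarrow> real_distribution (\<nu> i)"
begin

definition sklar_measure :: "('i \<Rightarrow> real) measure" where
  "sklar_measure = distr C (RPi I) (\<lambda>u. \<lambda>i\<in>I. quantile (\<nu> i) (u i))"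

lemma measurable_sklar_measure_map: "(\<lambda>u. \<lambda>i\<in>I. quantile (\<nu> i) (u i)) \<in> measurable C (RPi I)"
  by (intro measurable_restrict measurable_compose[OF borel_measurable_component[OF copula_measureD(2)[OF copula]]]
      real_distribution.borel_measurable_quantile \<nu>)

lemma prob_space_sklar_measure: "prob_space sklar_measure"
  unfolding sklar_measure_def
  by (rule prob_space.prob_space_distr[OF copula_measureD(1)[OF copula] measurable_sklar_measure_map])

lemma sets_sklar_measure: "sets sklar_measure = sets (RPi I)"
  by (simp add: sklar_measure_def)

lemma sklar_rel_sklar_measure: "sklar_rel I C sklar_measure (\<lambda>i. cdf (\<nu> i))"
proof -
  have sets_C: "sets C = sets (RPi I)"
    by (rule copula_measureD(2)[OF copula])
  let ?\<Psi> = "\<lambda>u. \<lambda>i\<in>I. quantile (\<nu> i) (u i)"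
  have "measure C (lower_orthant I J (\<lambda>j. cdf (\<nu> j) (z j))) = measure sklar_measure (lower_orthant I J z)"
    if J: "finite J" "J \<subseteq> I" for J z
  proof -
    have "AE u in C. \<forall>j\<in>J. 0 < u j \<and> u j < 1"
      using AE_copula_measure_open[OF copula] J by (simp add: countable_finite)
    then have "AE u in C. u \<in> lower_orthant I J (\<lambda>j. cdf (\<nu> j) (z j)) \<longleftrightarrow> u \<in> ?\<Psi> -` lower_orthant I J z \<inter> space C"
    proof eventually_elim
      case (elim u)
      then have "u j \<le> cdf (\<nu> j) (z j) \<longleftrightarrow> quantile (\<nu> j) (u j) \<le> z j" if "j \<in> J" for j
        using that J real_distribution.quantile_le_iff[OF \<nu>] by blast
      then show ?case
        using J sets_eq_imp_space_eq[OF sets_C] by (auto simp: lower_orthant_def space_PiM)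
    qed
    then have "measure C (lower_orthant I J (\<lambda>j. cdf (\<nu> j) (z j))) = measure C (?\<Psi> -` lower_orthant I J z \<inter> space C)"
      using sets_lower_orthant[OF J] sets_C
      by (intro measure_eq_AE measurable_sets[OF measurable_sklar_measure_map]) simp_all
    then show ?thesis
      unfolding sklar_measure_def
      by (simp add: measure_distr[OF measurable_sklar_measure_map sets_lower_orthant[OF J]])
  qed
  then show ?thesis
    by (simp add: sklar_rel_iff_lower_orthants sets_C sets_sklar_measure)
qed

end

lemma ex1_copula_measure_sklar_rel:
  assumes \<mu>: "prob_space \<mu>" "sets \<mu> = sets (RPi I)"
    and cont: "\<And>i t. i \<in> I \<Longrightarrow> isCont (cdf (marg1 \<mu> i)) t"
  shows "\<exists>!C. copula_measure I C \<and> sklar_rel I C \<mu> (\<lambda>i. cdf (marg1 \<mu> i))"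
proof (rule ex1I[of _ "sklar_copula I \<mu>"])
  note copula = copula_measure_sklar_copula[OF \<mu>] sklar_rel_sklar_copula[OF \<mu>]
  then show "copula_measure I (sklar_copula I \<mu>) \<and> sklar_rel I (sklar_copula I \<mu>) \<mu> (\<lambda>i. cdf (marg1 \<mu> i))"
    by blast
  have surj: "\<exists>x. cdf (marg1 \<mu> i) x = w" if "i \<in> I" "0 < w" "w < 1" for i w
    using real_distribution.ex_cdf_eq[OF real_distribution_marg1[OF \<mu> that(1)]] cont that by blast
  fix C assume "copula_measure I C \<and> sklar_rel I C \<mu> (\<lambda>i. cdf (marg1 \<mu> i))"
  then show "C = sklar_copula I \<mu>"
    using sklar_copula_unique[OF _ _ copula \<mu>(2) surj] by blast
qed

lemma ex1_sklar_rel_measure: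
  assumes C: "copula_measure I C" and \<nu>: "\<And>i. i \<in> I \<Longrightarrow> real_distribution (\<nu> i)"
  shows "\<exists>!\<mu>. prob_space \<mu> \<and> sets \<mu> = sets (RPi I) \<and> sklar_rel I C \<mu> (\<lambda>i. cdf (\<nu> i))"
proof (rule ex1I[of _ "sklar_measure I C \<nu>"])
  show "prob_space (sklar_measure I C \<nu>) \<and> sets (sklar_measure I C \<nu>) = sets (RPi I)
      \<and> sklar_rel I C (sklar_measure I C \<nu>) (\<lambda>i. cdf (\<nu> i))"
    using prob_space_sklar_measure[of I C \<nu>, OF C \<nu>] sets_sklar_measure[of I C \<nu>, OF C \<nu>]
      sklar_rel_sklar_measure[of I C \<nu>, OF C \<nu>]
    by blast
  then show "\<mu> = sklar_measure I C \<nu>"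
    if "prob_space \<mu> \<and> sets \<mu> = sets (RPi I) \<and> sklar_rel I C \<mu> (\<lambda>i. cdf (\<nu> i))" for \<mu>
    using that sklar_rel_unique by blast
qed

theorem theorem2p3:
  fixes I :: "'i set"
  shows "(\<forall>\<mu>. prob_space \<mu> \<and> sets \<mu> = sets (RPi I) \<longrightarrow>
            (\<exists>C. copula_measure I C \<and> sklar_rel I C \<mu> (\<lambda>i. cdf (marg1 \<mu> i))) \<and>
            ((\<forall>i\<in>I. \<forall>t. isCont (cdf (marg1 \<mu> i)) t) \<longrightarrow>
               (\<exists>!C. copula_measure I C \<and> sklar_rel I C \<mu> (\<lambda>i. cdf (marg1 \<mu> i)))))
       \<and> (\<forall>C (\<nu> :: 'i \<Rightarrow> real measure). copula_measure I C \<and> (\<forall>i\<in>I. real_distribution (\<nu> i)) \<longrightarrow>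
            (\<exists>!\<mu>. prob_space \<mu> \<and> sets \<mu> = sets (RPi I) \<and> sklar_rel I C \<mu> (\<lambda>i. cdf (\<nu> i))))"
proof (intro conjI allI impI)
  fix \<mu> :: "('i \<Rightarrow> real) measure"
  assume \<mu>: "prob_space \<mu> \<and> sets \<mu> = sets (RPi I)"
  then show "\<exists>C. copula_measure I C \<and> sklar_rel I C \<mu> (\<lambda>i. cdf (marg1 \<mu> i))"
    using copula_measure_sklar_copula sklar_rel_sklar_copula by blast
  assume "\<forall>i\<in>I. \<forall>t. isCont (cdf (marg1 \<mu> i)) t"
  with \<mu> show "\<exists>!C. copula_measure I C \<and> sklar_rel I C \<mu> (\<lambda>i. cdf (marg1 \<mu> i))"
    by (intro ex1_copula_measure_sklar_rel) auto
next
  fix C and \<nu> :: "'i \<Rightarrow> real measure"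
  assume "copula_measure I C \<and> (\<forall>i\<in>I. real_distribution (\<nu> i))"
  then show "\<exists>!\<mu>. prob_space \<mu> \<and> sets \<mu> = sets (RPi I) \<and> sklar_rel I C \<mu> (\<lambda>i. cdf (\<nu> i))"
    by (intro ex1_sklar_rel_measure) auto
qed

end
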